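(* Let $G=(V,E)$ be a graph with $|V|>4$ and let $v\in V$ be a 1-separator (cut vertex) of $G$. Let $A_1,\ldots,A_\ell$ be the connected components of $G-\{v\}$. Then there is an $i\in\{1,\ldots,\ell\}$ such that $\delta(G)=\delta(G-V(A_i))$.
   Context: For a graph $G=(V,E)$, $\mathrm{dist}(x,y)$ denotes the length of a shortest $x$-$y$ path ($\infty$ if none exists). For $a,b,c,d\in V$ let $D_1=\mathrm{dist}(a,b)+\mathrm{dist}(c,d)$, $D_2=\mathrm{dist}(a,c)+\mathrm{dist}(b,d)$, $D_3=\mathrm{dist}(a,d)+\mathrm{dist}(b,c)$, and define $\delta(a,b,c,d)=|D_i-D_j|$ where $\{i,j,k\}=\{1,2,3\}$ and $D_k\le\min\{D_i,D_j\}$. The hyperbolicity of $G$ is $\delta(G)=\max_{a,b,c,d\in V}\delta(a,b,c,d)$. $G-W$ denotes the graph obtained by deleting the vertices in $W$; a 1-separator is a vertex whose deletion increases the number of connected components. *)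

theory Defs
  imports Main "HOL-Library.Extended_Nat"
begin

text \<open>Walks only use vertices of V, so deleting vertices W is modelled by
passing the vertex set V - W together with the same E.\<close>

definition graph :: "'a set \<Rightarrow> ('a \<times> 'a) set \<Rightarrow> bool" where
  "graph V E \<longleftrightarrow> finite V \<and> E \<subseteq> V \<times> V \<and> sym E \<and> irrefl E"

definition walk :: "'a set \<Rightarrow> ('a \<times> 'a) set \<Rightarrow> 'a list \<Rightarrow> bool" where
  "walk V E p \<longleftrightarrow> p \<noteq> [] \<and> set p \<subseteq> V \<and>
     (\<forall>i. Suc i < length p \<longrightarrow> (p ! i, p ! Suc i) \<in> E)"

text \<open>Shortest path length; infinity if no path exists (Inf of empty set).\<close>
definition gdist :: "'a set \<Rightarrow> ('a \<times> 'a) set \<Rightarrow> 'a \<Rightarrow> 'a \<Rightarrow> enat" where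
  "gdist V E x y = (INF p \<in> {p. walk V E p \<and> hd p = x \<and> last p = y}. enat (length p - 1))"

text \<open>Absolute difference in enat; the case \<infinity> - \<infinity> is taken to be 0.\<close>
definition enat_absdiff :: "enat \<Rightarrow> enat \<Rightarrow> enat" where
  "enat_absdiff a b = (if a = b then 0 else max a b - min a b)"

definition delta4 :: "'a set \<Rightarrow> ('a \<times> 'a) set \<Rightarrow> 'a \<Rightarrow> 'a \<Rightarrow> 'a \<Rightarrow> 'a \<Rightarrow> enat" where
  "delta4 V E a b c d =
    (let D1 = gdist V E a b + gdist V E c d;
         D2 = gdist V E a c + gdist V E b d;
         D3 = gdist V E a d + gdist V E b c
     in if D1 \<le> min D2 D3 then enat_absdiff D2 D3
        else if D2 \<le> min D1 D3 then enat_absdiff D1 D3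
        else enat_absdiff D1 D2)"

definition hyperbolicity :: "'a set \<Rightarrow> ('a \<times> 'a) set \<Rightarrow> enat" where
  "hyperbolicity V E = (SUP q \<in> V \<times> V \<times> V \<times> V.
      (case q of (a, b, c, d) \<Rightarrow> delta4 V E a b c d))"

definition reachable :: "'a set \<Rightarrow> ('a \<times> 'a) set \<Rightarrow> 'a \<Rightarrow> 'a \<Rightarrow> bool" where
  "reachable V E x y \<longleftrightarrow> (\<exists>p. walk V E p \<and> hd p = x \<and> last p = y)"

definition components :: "'a set \<Rightarrow> ('a \<times> 'a) set \<Rightarrow> 'a set set" where
  "components V E = {C. \<exists>x\<in>V. C = {y. reachable V E x y}}"

definition cut_vertex :: "'a set \<Rightarrow> ('a \<times> 'a) set \<Rightarrow> 'a \<Rightarrow> bool" where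
  "cut_vertex V E v \<longleftrightarrow> v \<in> V \<and> card (components (V - {v}) E) > card (components V E)"

end

theory Submission
  imports Defs
begin

text \<open>Let \<open>v\<close> be a cut vertex and \<open>A\<close> a component of \<open>G - v\<close>. Every path leaving \<open>A\<close>
passes through \<open>v\<close>, so distances between vertices outside \<open>A\<close> are the same in \<open>G\<close> and
in \<open>G - A\<close>, and for \<open>x \<notin> A\<close>, \<open>d \<in> A\<close> we have \<open>dist(x,d) = dist(x,v) + dist(v,d)\<close>.
Take a quadruple realising \<open>\<delta>(G)\<close>. If some component contains at most one of its
points, replacing that point by \<open>v\<close> adds the same constant to all three sums \<open>D\<^sub>i\<close>
and so does not decrease \<open>\<delta>\<close>; the new quadruple lives in \<open>G - A\<close>. Otherwise two
components contain two points each, the two crossing sums coincide and dominate the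
third, and \<open>\<delta> = 0\<close>.\<close>

lemma walk_iff_successively:
  "walk V E p \<longleftrightarrow> p \<noteq> [] \<and> set p \<subseteq> V \<and> successively (\<lambda>x y. (x, y) \<in> E) p"
  unfolding walk_def successively_conv_nth by auto

lemma walk_rev: "sym E \<Longrightarrow> walk V E p \<Longrightarrow> walk V E (rev p)"
  unfolding walk_iff_successively by (auto elim!: successively_mono dest: symD)

lemma walk_appendD:
  "walk V E (p @ q) \<Longrightarrow> p \<noteq> [] \<Longrightarrow> walk V E p"
  "walk V E (p @ q) \<Longrightarrow> q \<noteq> [] \<Longrightarrow> walk V E q"
  unfolding walk_iff_successively by (auto simp: successively_append_iff)

lemma walk_subset: "walk V E p \<Longrightarrow> set p \<subseteq> W \<Longrightarrow> walk W E p"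
  unfolding walk_def by auto

lemma walk_join:
  assumes "walk V E p" "walk V E q" "last p = hd q"
  shows "walk V E (p @ tl q)" "hd (p @ tl q) = hd p" "last (p @ tl q) = last q"
    and "length (p @ tl q) = length p + length q - 1"
proof -
  have ne: "p \<noteq> []" "q \<noteq> []" using assms(1,2) unfolding walk_def by auto
  show "walk V E (p @ tl q)" using assms
    unfolding walk_iff_successively by (cases q) (auto simp: successively_append_iff successively_Cons)
  show "hd (p @ tl q) = hd p" "last (p @ tl q) = last q" "length (p @ tl q) = length p + length q - 1"
    using ne assms(3) by (cases q; auto simp: last_append)+
qed

lemma walk_take: "walk V E p \<Longrightarrow> walk V E (take (Suc i) p)"
  using walk_appendD(1)[of V E "take (Suc i) p" "drop (Suc i) p"] by (simp add: walk_def)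

lemma gdist_le_walk_length:
  "walk V E p \<Longrightarrow> hd p = x \<Longrightarrow> last p = y \<Longrightarrow> gdist V E x y \<le> enat (length p - 1)"
  unfolding gdist_def by (rule INF_lower) auto

lemma gdist_greatest:
  "(\<And>p. walk V E p \<Longrightarrow> hd p = x \<Longrightarrow> last p = y \<Longrightarrow> t \<le> enat (length p - 1)) \<Longrightarrow> t \<le> gdist V E x y"
  unfolding gdist_def by (rule INF_greatest) auto

lemma gdist_attained:
  assumes "gdist V E x y \<noteq> \<infinity>"
  obtains p where "walk V E p" "hd p = x" "last p = y" "gdist V E x y = enat (length p - 1)"
proof -
  define S where "S = (\<lambda>p. enat (length p - 1)) ` {p. walk V E p \<and> hd p = x \<and> last p = y}"
  have gdist_eq: "gdist V E x y = Inf S" unfolding gdist_def S_def by simp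
  hence "S \<noteq> {}" using assms by (auto simp: Inf_enat_def)
  hence "Inf S \<in> S" unfolding Inf_enat_def by (auto intro: LeastI)
  thus ?thesis using that gdist_eq unfolding S_def by auto
qed

lemma gdist_sym:
  assumes "sym E"
  shows "gdist V E x y = gdist V E y x"
proof -
  have le: "gdist V E a b \<le> gdist V E b a" for a b
  proof (rule gdist_greatest)
    fix p assume "walk V E p" "hd p = b" "last p = a"
    thus "gdist V E a b \<le> enat (length p - 1)"
      using gdist_le_walk_length[OF walk_rev[OF assms]] by (simp add: hd_rev last_rev)
  qed
  show ?thesis using le[of x y] le[of y x] by simp
qed

lemma gdist_triangle: "gdist V E x z \<le> gdist V E x y + gdist V E y z"
proof (cases "gdist V E x y = \<infinity> \<or> gdist V E y z = \<infinity>")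
  case True
  thus ?thesis by auto
next
  case False
  then obtain p where p: "walk V E p" "hd p = x" "last p = y" "gdist V E x y = enat (length p - 1)"
    using gdist_attained[of V E x y] by blast
  obtain q where q: "walk V E q" "hd q = y" "last q = z" "gdist V E y z = enat (length q - 1)"
    using gdist_attained[of V E y z] False by blast
  have "last p = hd q" using p(3) q(2) by simp
  note pq = walk_join[OF p(1) q(1) this]
  have "length p > 0" "length q > 0" using p(1) q(1) unfolding walk_def by auto
  hence len: "length (p @ tl q) - 1 = (length p - 1) + (length q - 1)"
    using pq(4) by linarith
  have "gdist V E x z \<le> enat (length (p @ tl q) - 1)"
    using pq p(2) q(3) by (intro gdist_le_walk_length) auto
  also have "\<dots> = gdist V E x y + gdist V E y z"
    unfolding len p(4) q(4) by simp
  finally show ?thesis .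
qed

lemma reachable_sym:
  assumes "sym E" "reachable W E x y"
  shows "reachable W E y x"
proof -
  obtain p where "walk W E p" "hd p = x" "last p = y" using assms(2) unfolding reachable_def by blast
  thus ?thesis
    unfolding reachable_def using walk_rev[OF assms(1)] by (intro exI[of _ "rev p"]) (simp add: hd_rev last_rev)
qed

lemma reachable_trans:
  assumes "reachable W E x y" "reachable W E y z"
  shows "reachable W E x z"
proof -
  obtain p q where p: "walk W E p" "hd p = x" "last p = y"
    and q: "walk W E q" "hd q = y" "last q = z"
    using assms unfolding reachable_def by blast
  thus ?thesis unfolding reachable_def using walk_join(1-3)[OF p(1) q(1)] by auto
qed

lemma reachable_walk_hd:
  assumes "walk W E p" "x \<in> set p"
  shows "reachable W E (hd p) x"
proof -
  obtain i where i: "i < length p" "p ! i = x" using assms(2) by (auto simp: in_set_conv_nth)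
  have "walk W E (take (Suc i) p)" using walk_take[OF assms(1)] .
  moreover have "hd (take (Suc i) p) = hd p" "last (take (Suc i) p) = x"
    using i by (auto simp: take_Suc_conv_app_nth hd_append hd_conv_nth)
  ultimately show ?thesis unfolding reachable_def by blast
qed

lemma components_subset: "A \<in> components W E \<Longrightarrow> A \<subseteq> W"
  unfolding components_def reachable_def walk_def by (auto dest!: last_in_set)

lemma component_eq_reachable:
  assumes "sym E" "A \<in> components W E" "x \<in> A"
  shows "A = {y. reachable W E x y}"
proof -
  obtain x0 where A: "A = {y. reachable W E x0 y}" using assms(2) unfolding components_def by blast
  hence x0x: "reachable W E x0 x" using assms(3) by blast
  have "reachable W E x y \<longleftrightarrow> reachable W E x0 y" for y
    using reachable_trans[OF x0x, of y] reachable_trans[OF reachable_sym[OF assms(1) x0x], of y] by blast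
  thus ?thesis using A by blast
qed

lemma components_disjoint:
  "sym E \<Longrightarrow> A \<in> components W E \<Longrightarrow> B \<in> components W E \<Longrightarrow> x \<in> A \<Longrightarrow> x \<in> B \<Longrightarrow> A = B"
  using component_eq_reachable[of E A W x] component_eq_reachable[of E B W x] by simp

lemma walk_in_component:
  assumes "sym E" "A \<in> components W E" "walk W E p" "x \<in> set p" "x \<in> A"
  shows "set p \<subseteq> A"
proof
  fix y assume "y \<in> set p"
  have "reachable W E x (hd p)" using reachable_sym[OF assms(1) reachable_walk_hd[OF assms(3,4)]] .
  hence "reachable W E x y" using reachable_trans[OF _ reachable_walk_hd[OF assms(3) \<open>y \<in> set p\<close>]] by blast
  thus "y \<in> A" using component_eq_reachable[OF assms(1,2,5)] by blast
qed

lemma walk_avoiding_cut_vertex_misses_component: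
  assumes "sym E" "A \<in> components (V - {v}) E" "walk V E p" "v \<notin> set p" "x \<in> set p" "x \<notin> A"
  shows "set p \<inter> A = {}"
proof (rule ccontr)
  assume "set p \<inter> A \<noteq> {}"
  then obtain y where y: "y \<in> set p" "y \<in> A" by blast
  have "set p \<subseteq> V - {v}" using assms(3,4) unfolding walk_def by blast
  hence "walk (V - {v}) E p" by (rule walk_subset[OF assms(3)])
  hence "set p \<subseteq> A" using walk_in_component[OF assms(1,2) _ y] by blast
  thus False using assms(5,6) by blast
qed

lemma walk_leaving_component_hits_cut_vertex:
  assumes "sym E" "A \<in> components (V - {v}) E" "walk V E p" "hd p \<in> A" "last p \<notin> A"
  shows "v \<in> set p"
proof (rule ccontr)
  assume "v \<notin> set p"
  have "p \<noteq> []" using assms(3) unfolding walk_def by blast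
  hence "set p \<inter> A = {}"
    using walk_avoiding_cut_vertex_misses_component[OF assms(1-3) \<open>v \<notin> set p\<close> last_in_set] assms(5) by blast
  thus False using assms(4) hd_in_set[OF \<open>p \<noteq> []\<close>] by blast
qed

lemma gdist_through_cut_vertex:
  assumes "sym E" "A \<in> components (V - {v}) E" "x \<in> A" "y \<notin> A"
  shows "gdist V E x y = gdist V E x v + gdist V E v y"
proof (rule antisym)
  show "gdist V E x v + gdist V E v y \<le> gdist V E x y"
  proof (rule gdist_greatest)
    fix p assume p: "walk V E p" "hd p = x" "last p = y"
    hence "v \<in> set p" using walk_leaving_component_hits_cut_vertex[OF assms(1,2)] assms(3,4) by blast
    then obtain ys zs where pv: "p = ys @ v # zs" by (meson split_list)
    have "gdist V E x v \<le> enat (length ys)"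
      using gdist_le_walk_length[of V E "ys @ [v]"] walk_appendD(1)[of V E "ys @ [v]" zs] p pv
      by (auto simp: hd_append)
    moreover have "gdist V E v y \<le> enat (length zs)"
      using gdist_le_walk_length[of V E "v # zs"] walk_appendD(2)[of V E ys "v # zs"] p pv by auto
    ultimately have "gdist V E x v + gdist V E v y \<le> enat (length ys) + enat (length zs)"
      by (rule add_mono)
    also have "\<dots> = enat (length p - 1)" using pv by simp
    finally show "gdist V E x v + gdist V E v y \<le> enat (length p - 1)" .
  qed
qed (rule gdist_triangle)

text \<open>Cut the walk from its first to its last visit of \<open>v\<close>; the remaining two pieces
avoid \<open>v\<close> and start resp. end outside \<open>A\<close>, so they miss \<open>A\<close>.\<close>

lemma walk_shortcut_around_component:
  assumes "sym E" "A \<in> components (V - {v}) E" "walk V E p" "hd p \<notin> A" "last p \<notin> A"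
  obtains q where "walk (V - A) E q" "hd q = hd p" "last q = last p" "length q \<le> length p"
proof (cases "v \<in> set p")
  case False
  have "p \<noteq> []" using assms(3) unfolding walk_def by blast
  hence "set p \<inter> A = {}"
    using walk_avoiding_cut_vertex_misses_component[OF assms(1-3) False hd_in_set] assms(4) by blast
  hence "set p \<subseteq> V - A" using assms(3) unfolding walk_def by blast
  thus ?thesis by (rule that[OF walk_subset[OF assms(3)]]) simp_all
next
  case True
  obtain ys zs where p1: "p = ys @ v # zs" "v \<notin> set ys" using split_list_first[OF True] by blast
  obtain ys' zs' where p2: "v # zs = ys' @ v # zs'" "v \<notin> set zs'"
    using split_list_last[of v "v # zs"] by auto
  define q where "q = ys @ v # zs'"
  have p_eq: "p = (ys @ ys') @ v # zs'" using p1 p2 by simp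
  have vA: "v \<notin> A" using components_subset[OF assms(2)] by blast
  have ys: "set ys \<inter> A = {}"
  proof (cases "ys = []")
    case False
    have "walk V E ys" using walk_appendD(1)[of V E ys "v # zs"] assms(3) p1(1) False by simp
    thus ?thesis using walk_avoiding_cut_vertex_misses_component[OF assms(1,2) _ p1(2) hd_in_set[OF False]]
      assms(4) p1(1) False by simp
  qed simp
  have zs': "set zs' \<inter> A = {}"
  proof (cases "zs' = []")
    case False
    have "walk V E zs'" using walk_appendD(2)[of V E "ys @ ys' @ [v]" zs'] assms(3) p_eq False by simp
    thus ?thesis using walk_avoiding_cut_vertex_misses_component[OF assms(1,2) _ p2(2) last_in_set[OF False]]
      assms(5) p_eq False by simp
  qed simp
  have "walk V E (ys @ [v])" using walk_appendD(1)[of V E "ys @ [v]" "zs"] assms(3) p1(1) by simp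
  moreover have "walk V E (v # zs')" using walk_appendD(2)[of V E "ys @ ys'" "v # zs'"] assms(3) p_eq by simp
  ultimately have q: "walk V E q" using walk_join(1)[of V E "ys @ [v]" "v # zs'"] unfolding q_def by simp
  have "set q \<subseteq> V" using q unfolding walk_def by blast
  moreover have "set q \<inter> A = {}" using ys zs' vA unfolding q_def by auto
  ultimately have "walk (V - A) E q" using walk_subset[OF q] by blast
  moreover have "hd q = hd p" using p1(1) unfolding q_def by (simp add: hd_append)
  moreover have "last q = last p" "length q \<le> length p" using p_eq unfolding q_def by simp_all
  ultimately show ?thesis by (rule that)
qed

lemma gdist_delete_component:
  assumes "sym E" "A \<in> components (V - {v}) E" "x \<notin> A" "y \<notin> A"
  shows "gdist (V - A) E x y = gdist V E x y"
proof (rule antisym)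
  show "gdist (V - A) E x y \<le> gdist V E x y"
  proof (rule gdist_greatest)
    fix p assume p: "walk V E p" "hd p = x" "last p = y"
    then obtain q where q: "walk (V - A) E q" "hd q = x" "last q = y" "length q \<le> length p"
      using walk_shortcut_around_component[OF assms(1,2) p(1)] assms(3,4) unfolding p(2,3) by blast
    have "gdist (V - A) E x y \<le> enat (length q - 1)" by (rule gdist_le_walk_length[OF q(1-3)])
    also have "\<dots> \<le> enat (length p - 1)" using q(4) by simp
    finally show "gdist (V - A) E x y \<le> enat (length p - 1)" .
  qed
  show "gdist V E x y \<le> gdist (V - A) E x y"
  proof (rule gdist_greatest)
    fix p assume "walk (V - A) E p" "hd p = x" "last p = y"
    thus "gdist V E x y \<le> enat (length p - 1)"
      using walk_subset[of "V - A" E p V] by (intro gdist_le_walk_length) (auto simp: walk_def)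
  qed
qed

lemma cut_vertex_two_components:
  assumes "finite V" "cut_vertex V E v"
  obtains A B where "A \<in> components (V - {v}) E" "B \<in> components (V - {v}) E" "A \<noteq> B"
proof -
  have "v \<in> V" using assms(2) unfolding cut_vertex_def by blast
  have "components V E = (\<lambda>x. {y. reachable V E x y}) ` V" unfolding components_def by auto
  hence "card (components V E) \<ge> 1" using assms(1) \<open>v \<in> V\<close> by (auto simp: Suc_le_eq card_gt_0_iff)
  hence two: "card (components (V - {v}) E) \<ge> 2" using assms(2) unfolding cut_vertex_def by simp
  then obtain A where A: "A \<in> components (V - {v}) E" by fastforce
  have "components (V - {v}) E \<noteq> {A}" using two by auto
  then obtain B where "B \<in> components (V - {v}) E" "B \<noteq> A" using A by blast
  thus ?thesis using that A by blast
qed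

definition delta_of_sums :: "enat \<Rightarrow> enat \<Rightarrow> enat \<Rightarrow> enat" where
  "delta_of_sums x y z = (if x \<le> min y z then enat_absdiff y z
      else if y \<le> min x z then enat_absdiff x z else enat_absdiff x y)"

lemma delta4_eq_delta_of_sums:
  "delta4 V E a b c d = delta_of_sums (gdist V E a b + gdist V E c d)
     (gdist V E a c + gdist V E b d) (gdist V E a d + gdist V E b c)"
  unfolding delta4_def delta_of_sums_def Let_def by simp

lemma enat_absdiff_commute: "enat_absdiff x y = enat_absdiff y x"
  unfolding enat_absdiff_def by (auto simp: max.commute min.commute)

lemma enat_add_right_cancel_le: "t \<noteq> \<infinity> \<Longrightarrow> x + t \<le> y + t \<longleftrightarrow> x \<le> (y :: enat)"
  by (cases x; cases y; cases t) auto

lemma enat_absdiff_add_right: "t \<noteq> \<infinity> \<Longrightarrow> enat_absdiff (x + t) (y + t) = enat_absdiff x y"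
  unfolding enat_absdiff_def by (cases x; cases y; cases t) (auto simp: max_def min_def)

lemma delta_of_sums_swap12: "delta_of_sums x y z = delta_of_sums y x z"
  unfolding delta_of_sums_def by (auto simp: enat_absdiff_commute enat_absdiff_def)

lemma delta_of_sums_swap23: "delta_of_sums x y z = delta_of_sums x z y"
  unfolding delta_of_sums_def by (auto simp: enat_absdiff_commute enat_absdiff_def)

lemma delta_of_sums_swap13: "delta_of_sums x y z = delta_of_sums z y x"
  using delta_of_sums_swap12 delta_of_sums_swap23 by metis

lemma delta_of_sums_eq_0: "x \<le> y \<Longrightarrow> delta_of_sums x y y = 0"
  unfolding delta_of_sums_def enat_absdiff_def by auto

lemma delta_of_sums_add_right:
  "t \<noteq> \<infinity> \<Longrightarrow> delta_of_sums (x + t) (y + t) (z + t) = delta_of_sums x y z"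
  unfolding delta_of_sums_def
  by (simp add: enat_absdiff_add_right enat_add_right_cancel_le)

lemma delta_of_sums_infinity: "delta_of_sums \<infinity> \<infinity> \<infinity> = 0"
  unfolding delta_of_sums_def enat_absdiff_def by simp

context
  fixes V :: "'a set" and E :: "('a \<times> 'a) set"
  assumes sym: "sym E"
begin

lemma delta4_swap_bc: "delta4 V E a b c d = delta4 V E a c b d"
  unfolding delta4_eq_delta_of_sums using gdist_sym[OF sym] delta_of_sums_swap12 by (metis add.commute)

lemma delta4_swap_cd: "delta4 V E a b c d = delta4 V E a b d c"
  unfolding delta4_eq_delta_of_sums using gdist_sym[OF sym] delta_of_sums_swap23 by (metis add.commute)

lemma delta4_swap_bd: "delta4 V E a b c d = delta4 V E a d c b"
  unfolding delta4_eq_delta_of_sums using gdist_sym[OF sym] delta_of_sums_swap13 by (metis add.commute)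

lemma delta4_swap_ad: "delta4 V E a b c d = delta4 V E d b c a"
  unfolding delta4_eq_delta_of_sums using gdist_sym[OF sym] delta_of_sums_swap12 by (metis add.commute)

end

text \<open>All three sums grow by \<open>dist(d,v)\<close> when \<open>v\<close> is replaced by \<open>d\<close>; if that distance is
infinite, all three sums are infinite and the left-hand side vanishes.\<close>

lemma delta4_le_replace_by_cut_vertex:
  assumes "sym E" "A \<in> components (V - {v}) E" "d \<in> A" "a \<notin> A" "b \<notin> A" "c \<notin> A"
  shows "delta4 V E a b c d \<le> delta4 V E a b c v"
proof -
  define t where "t = gdist V E d v"
  have through_v: "gdist V E x d = gdist V E x v + t" if "x \<notin> A" for x
    using gdist_through_cut_vertex[OF assms(1-3) that] gdist_sym[OF assms(1)] unfolding t_def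
    by (simp add: add.commute)
  have "delta4 V E a b c d = delta_of_sums ((gdist V E a b + gdist V E c v) + t)
     ((gdist V E a c + gdist V E b v) + t) ((gdist V E a v + gdist V E b c) + t)"
    unfolding delta4_eq_delta_of_sums using through_v assms(4-6) by (simp add: ac_simps)
  thus ?thesis
    using delta_of_sums_add_right[of t] delta_of_sums_infinity
    by (cases "t = \<infinity>") (simp_all add: delta4_eq_delta_of_sums)
qed

lemma delta4_two_pairs_eq_0:
  assumes "sym E" "A \<in> components (V - {v}) E" "B \<in> components (V - {v}) E" "A \<noteq> B"
    and "a \<in> A" "b \<in> A" "c \<in> B" "d \<in> B"
  shows "delta4 V E a b c d = 0"
proof -
  have notA: "c \<notin> A" "d \<notin> A" using components_disjoint[OF assms(1-3)] assms(4,7,8) by blast+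
  have ac: "gdist V E a c = gdist V E a v + gdist V E v c"
    and ad: "gdist V E a d = gdist V E a v + gdist V E v d"
    and bc: "gdist V E b c = gdist V E b v + gdist V E v c"
    and bd: "gdist V E b d = gdist V E b v + gdist V E v d"
    using gdist_through_cut_vertex[OF assms(1,2)] assms(5,6) notA by blast+
  have "gdist V E a b + gdist V E c d \<le> (gdist V E a v + gdist V E v b) + (gdist V E c v + gdist V E v d)"
    by (intro add_mono gdist_triangle)
  also have "\<dots> = gdist V E a c + gdist V E b d"
    unfolding ac bd using gdist_sym[OF assms(1)] by (simp add: ac_simps)
  finally have "gdist V E a b + gdist V E c d \<le> gdist V E a c + gdist V E b d" .
  moreover have "gdist V E a d + gdist V E b c = gdist V E a c + gdist V E b d"
    unfolding ac ad bc bd by (simp add: ac_simps)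
  ultimately show ?thesis unfolding delta4_eq_delta_of_sums by (simp add: delta_of_sums_eq_0)
qed

lemma delta4_le_hyperbolicity:
  "a \<in> W \<Longrightarrow> b \<in> W \<Longrightarrow> c \<in> W \<Longrightarrow> d \<in> W \<Longrightarrow> delta4 W E a b c d \<le> hyperbolicity W E"
  unfolding hyperbolicity_def by (rule SUP_upper2[of "(a, b, c, d)"]) auto

lemma hyperbolicity_attained:
  assumes "finite V" "V \<noteq> {}"
  obtains a b c d where "a \<in> V" "b \<in> V" "c \<in> V" "d \<in> V" "hyperbolicity V E = delta4 V E a b c d"
proof -
  let ?S = "(\<lambda>(a, b, c, d). delta4 V E a b c d) ` (V \<times> V \<times> V \<times> V)"
  have "finite ?S" "?S \<noteq> {}" using assms by auto
  hence "Sup ?S \<in> ?S" unfolding Sup_enat_def using Max_in by auto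
  thus ?thesis using that unfolding hyperbolicity_def by auto
qed

lemma delta4_delete_component:
  assumes "sym E" "A \<in> components (V - {v}) E" "a \<notin> A" "b \<notin> A" "c \<notin> A" "d \<notin> A"
  shows "delta4 (V - A) E a b c d = delta4 V E a b c d"
  unfolding delta4_def using gdist_delete_component[OF assms(1,2)] assms(3-6) by simp

lemma hyperbolicity_delete_component_le:
  assumes "sym E" "A \<in> components (V - {v}) E"
  shows "hyperbolicity (V - A) E \<le> hyperbolicity V E"
  unfolding hyperbolicity_def[of "V - A"]
proof (rule SUP_least)
  fix q assume "q \<in> (V - A) \<times> (V - A) \<times> (V - A) \<times> (V - A)"
  then obtain a b c d where "q = (a, b, c, d)" "a \<in> V - A" "b \<in> V - A" "c \<in> V - A" "d \<in> V - A"
    by auto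
  thus "(case q of (a, b, c, d) \<Rightarrow> delta4 (V - A) E a b c d) \<le> hyperbolicity V E"
    using delta4_delete_component[OF assms] delta4_le_hyperbolicity[of a V b c d E] by simp
qed

lemma delta4_le_hyperbolicity_delete_component:
  assumes "sym E" "A \<in> components (V - {v}) E" "v \<in> V"
    and "a \<in> V - A" "b \<in> V - A" "c \<in> V - A" "d \<in> V"
  shows "delta4 V E a b c d \<le> hyperbolicity (V - A) E"
proof (cases "d \<in> A")
  case True
  have "v \<in> V - A" using components_subset[OF assms(2)] assms(3) by blast
  have "delta4 V E a b c d \<le> delta4 V E a b c v"
    using delta4_le_replace_by_cut_vertex[OF assms(1,2) True] assms(4-6) by blast
  also have "\<dots> = delta4 (V - A) E a b c v"
    using delta4_delete_component[OF assms(1,2)] assms(4-6) \<open>v \<in> V - A\<close> by simp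
  also have "\<dots> \<le> hyperbolicity (V - A) E"
    using assms(4-6) \<open>v \<in> V - A\<close> by (intro delta4_le_hyperbolicity)
  finally show ?thesis .
next
  case False
  hence "delta4 V E a b c d = delta4 (V - A) E a b c d"
    using delta4_delete_component[OF assms(1,2)] assms(4-6) by simp
  also have "\<dots> \<le> hyperbolicity (V - A) E"
    using assms(4-7) False by (intro delta4_le_hyperbolicity) auto
  finally show ?thesis .
qed

lemma delta4_le_hyperbolicity_delete_component_three_outside:
  assumes "sym E" "A \<in> components (V - {v}) E" "v \<in> V" "a \<in> V" "b \<in> V" "c \<in> V" "d \<in> V"
    and "(a \<notin> A \<and> b \<notin> A \<and> c \<notin> A) \<or> (a \<notin> A \<and> b \<notin> A \<and> d \<notin> A)
       \<or> (a \<notin> A \<and> c \<notin> A \<and> d \<notin> A) \<or> (b \<notin> A \<and> c \<notin> A \<and> d \<notin> A)"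
  shows "delta4 V E a b c d \<le> hyperbolicity (V - A) E"
proof -
  note le = delta4_le_hyperbolicity_delete_component[OF assms(1-3)]
  from assms(8) show ?thesis
  proof (elim disjE conjE)
    assume "a \<notin> A" "b \<notin> A" "c \<notin> A"
    thus ?thesis using le assms(4-7) by simp
  next
    assume "a \<notin> A" "b \<notin> A" "d \<notin> A"
    thus ?thesis using le[of a b d c] assms(4-7) delta4_swap_cd[OF assms(1)] by simp
  next
    assume "a \<notin> A" "c \<notin> A" "d \<notin> A"
    thus ?thesis using le[of a d c b] assms(4-7) delta4_swap_bd[OF assms(1)] by simp
  next
    assume "b \<notin> A" "c \<notin> A" "d \<notin> A"
    thus ?thesis using le[of d b c a] assms(4-7) delta4_swap_ad[OF assms(1)] by simp
  qed
qed

lemma delta4_eq_0_if_split_between_components: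
  assumes "sym E" "X \<in> components (V - {v}) E" "Y \<in> components (V - {v}) E" "X \<noteq> Y" "a \<in> X"
    and "(b \<in> X \<and> c \<in> Y \<and> d \<in> Y) \<or> (c \<in> X \<and> b \<in> Y \<and> d \<in> Y) \<or> (d \<in> X \<and> b \<in> Y \<and> c \<in> Y)"
  shows "delta4 V E a b c d = 0"
  using assms(6)
proof (elim disjE conjE)
  assume "b \<in> X" "c \<in> Y" "d \<in> Y"
  thus ?thesis using delta4_two_pairs_eq_0[OF assms(1-5)] by blast
next
  assume "c \<in> X" "b \<in> Y" "d \<in> Y"
  thus ?thesis using delta4_two_pairs_eq_0[OF assms(1-5)] delta4_swap_bc[OF assms(1)] by metis
next
  assume "d \<in> X" "b \<in> Y" "c \<in> Y"
  thus ?thesis using delta4_two_pairs_eq_0[OF assms(1-5)] delta4_swap_bd[OF assms(1)] by metis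
qed

lemma exists_component_delta4_le_hyperbolicity:
  assumes "graph V E" "cut_vertex V E v" "a \<in> V" "b \<in> V" "c \<in> V" "d \<in> V"
  shows "\<exists>A \<in> components (V - {v}) E. delta4 V E a b c d \<le> hyperbolicity (V - A) E"
proof -
  have sym: "sym E" and "finite V" using assms(1) unfolding graph_def by blast+
  have "v \<in> V" using assms(2) unfolding cut_vertex_def by blast
  obtain A B where AB: "A \<in> components (V - {v}) E" "B \<in> components (V - {v}) E" "A \<noteq> B"
    using cut_vertex_two_components[OF \<open>finite V\<close> assms(2)] by blast
  let ?three_outside = "\<lambda>A. (a \<notin> A \<and> b \<notin> A \<and> c \<notin> A) \<or> (a \<notin> A \<and> b \<notin> A \<and> d \<notin> A)
       \<or> (a \<notin> A \<and> c \<notin> A \<and> d \<notin> A) \<or> (b \<notin> A \<and> c \<notin> A \<and> d \<notin> A)"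
  show ?thesis
  proof (cases "?three_outside A \<or> ?three_outside B")
    case True
    thus ?thesis
      using delta4_le_hyperbolicity_delete_component_three_outside[OF sym _ \<open>v \<in> V\<close> assms(3-6)] AB
      by blast
  next
    case False
    have "x \<in> A \<longrightarrow> x \<notin> B" for x using components_disjoint[OF sym AB(1,2)] AB(3) by blast
    from this[of a] this[of b] this[of c] this[of d] False
    have "(a \<in> A \<and> ((b \<in> A \<and> c \<in> B \<and> d \<in> B) \<or> (c \<in> A \<and> b \<in> B \<and> d \<in> B) \<or> (d \<in> A \<and> b \<in> B \<and> c \<in> B)))
      \<or> (a \<in> B \<and> ((b \<in> B \<and> c \<in> A \<and> d \<in> A) \<or> (c \<in> B \<and> b \<in> A \<and> d \<in> A) \<or> (d \<in> B \<and> b \<in> A \<and> c \<in> A)))"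
      by argo
    hence "delta4 V E a b c d = 0"
      using delta4_eq_0_if_split_between_components[OF sym AB(1,2,3)]
        delta4_eq_0_if_split_between_components[OF sym AB(2,1) AB(3)[symmetric]] by blast
    thus ?thesis using AB(1) by auto
  qed
qed

theorem lemma3:
  fixes V :: "'a set" and E :: "('a \<times> 'a) set" and v :: 'a
  assumes "graph V E"
    and "card V > 4"
    and "cut_vertex V E v"
  shows "\<exists>A \<in> components (V - {v}) E. hyperbolicity V E = hyperbolicity (V - A) E"
proof -
  have sym: "sym E" and "finite V" using assms(1) unfolding graph_def by blast+
  moreover have "V \<noteq> {}" using assms(3) unfolding cut_vertex_def by blast
  ultimately obtain a b c d where abcd: "a \<in> V" "b \<in> V" "c \<in> V" "d \<in> V"
    and max: "hyperbolicity V E = delta4 V E a b c d"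
    using hyperbolicity_attained by blast
  then obtain A where A: "A \<in> components (V - {v}) E" "delta4 V E a b c d \<le> hyperbolicity (V - A) E"
    using exists_component_delta4_le_hyperbolicity[OF assms(1,3) abcd] by blast
  have "hyperbolicity V E = hyperbolicity (V - A) E"
    using hyperbolicity_delete_component_le[OF sym A(1)] A(2) max by simp
  thus ?thesis using A(1) by blast
qed

end
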